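(* Fix $0<\tau<1$ and a positive even integer $k$ (not depending on $n$). For each $n$, let $P_n=\{x_1,\dots,x_n\}\subset\mathbb{R}^2$ be the discrete circle and let $\phi^*_n:P_n\to\mathbb{R}^2$, $y_i=\phi^*_n(x_i)$, be a maximizer of the simplified t-SNE objective $$C(y_1,\dots,y_n)=\sum_{(i,j)\in\mathcal N_k}\log q_{ij}.$$ Suppose that for each $n$ the map $\phi^*_n$ is bilipschitz with scaling factor $S_n=n^\tau$ and some distortion factor $L\ge 1$, and let $L_n$ denote the smallest such distortion factor. Then $L_n\to\infty$ as $n\to\infty$.
   Context: The discrete circle is $P_n=\{x_i=(\cos(2\pi i/n),\sin(2\pi i/n)) : 1\le i\le n\}$. For indices $i,j\in\{1,\dots,n\}$ let $d(i,j)=\min(|i-j|,\,n-|i-j|)$ be the cyclic index distance. The neighbor set $\mathcal N_k$ is the set of ordered pairs $(i,j)$ with $1\le d(i,j)\le k/2$ (so each point has exactly its $k$ nearest neighbors and $|\mathcal N_k|=nk$); this corresponds to t-SNE input affinities $p_{ij}=1/(2nk)$ for neighbor pairs and $p_{ij}=0$ otherwise. For points $y_1,\dots,y_n\in\mathbb{R}^2$, the embedding affinities are $q_{ij}=\dfrac{(1+\|y_i-y_j\|^2)^{-1}}{\sum_{a\neq b}(1+\|y_a-y_b\|^2)^{-1}}$. A map $\phi:X\to\mathbb{R}^2$ is bilipschitz with scaling factor $S>0$ and distortion factor $L\ge1$ if $S\le \|\phi(x)-\phi(x')\|/\|x-x'\|\le SL$ for all distinct $x,x'\in X$. *)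

theory Defs
  imports "HOL-Analysis.Analysis"
begin

text \<open>Points of R^2 are modelled as real \<times> real (whose norm is the Euclidean norm).
  A configuration of n embedded points is a function y :: nat \<Rightarrow> real \<times> real,
  of which only the values on {1..n} matter.\<close>

definition circ_pt :: "nat \<Rightarrow> nat \<Rightarrow> real \<times> real" where
  "circ_pt n i = (cos (2 * pi * real i / real n), sin (2 * pi * real i / real n))"

definition cyc_dist :: "nat \<Rightarrow> nat \<Rightarrow> nat \<Rightarrow> nat" where
  "cyc_dist n i j = (let a = (if j \<le> i then i - j else j - i) in min a (n - a))"

definition nbr_set :: "nat \<Rightarrow> nat \<Rightarrow> (nat \<times> nat) set" where
  "nbr_set n k = {(i, j). i \<in> {1..n} \<and> j \<in> {1..n} \<and> 1 \<le> cyc_dist n i j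
                     \<and> real (cyc_dist n i j) \<le> real k / 2}"

definition q_aff :: "nat \<Rightarrow> (nat \<Rightarrow> real \<times> real) \<Rightarrow> nat \<Rightarrow> nat \<Rightarrow> real" where
  "q_aff n y i j = inverse (1 + (norm (y i - y j))\<^sup>2) /
     (\<Sum>a\<in>{1..n}. \<Sum>b\<in>{1..n} - {a}. inverse (1 + (norm (y a - y b))\<^sup>2))"

definition tsne_obj :: "nat \<Rightarrow> nat \<Rightarrow> (nat \<Rightarrow> real \<times> real) \<Rightarrow> real" where
  "tsne_obj n k y = (\<Sum>(i, j)\<in>nbr_set n k. ln (q_aff n y i j))"

definition tsne_maximizer :: "nat \<Rightarrow> nat \<Rightarrow> (nat \<Rightarrow> real \<times> real) \<Rightarrow> bool" where
  "tsne_maximizer n k y \<longleftrightarrow> (\<forall>z. tsne_obj n k z \<le> tsne_obj n k y)"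

definition bilipschitz :: "nat \<Rightarrow> (nat \<Rightarrow> real \<times> real) \<Rightarrow> real \<Rightarrow> real \<Rightarrow> bool" where
  "bilipschitz n y S L \<longleftrightarrow> S > 0 \<and> L \<ge> 1 \<and>
     (\<forall>i\<in>{1..n}. \<forall>j\<in>{1..n}. i \<noteq> j \<longrightarrow>
        S \<le> dist (y i) (y j) / dist (circ_pt n i) (circ_pt n j) \<and>
        dist (y i) (y j) / dist (circ_pt n i) (circ_pt n j) \<le> S * L)"

definition min_distortion :: "nat \<Rightarrow> (nat \<Rightarrow> real \<times> real) \<Rightarrow> real \<Rightarrow> real" where
  "min_distortion n y S = Inf {L. bilipschitz n y S L}"

end

theory Submission
  imports Defs "HOL-Real_Asymp.Real_Asymp"
begin

(* Let Z(y) be the sum of the Cauchy kernels (1 + |y_a - y_b|^2)^-1 over all ordered pairs.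
   The objective is the sum of the log-kernels over the nk neighbour pairs minus nk log Z(y),
   and the log-kernels are nonpositive. Comparing a maximizer y with the discrete circle scaled
   by n, whose neighbour distances are at most pi k and whose Z is at most 4n, gives
   Z(y) <= 4n (1 + (pi k)^2). On the other hand, if y is bilipschitz with scaling n^tau and
   distortion L and M n^tau <= n, each point lies within 2 pi L of the M points following it,
   so Z(y) >= n M / (2 (1 + (2 pi L)^2)). Hence M <= 8 (1 + (pi k)^2) (1 + (2 pi L)^2), and
   since n^tau = o(n) every M is admissible for large n. *)

lemma half_le_sin:
  assumes "0 \<le> x" "x \<le> pi / 2"
  shows "x / 2 \<le> sin x"
proof -
  have "\<bar>sin x - x\<bar> \<le> x ^ 3 / 6"
    using Maclaurin_sin_bound[of x 3] assms(1)
    by (simp add: numeral_3_eq_3 sin_coeff_def eval_nat_numeral)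
  moreover have "x * x \<le> 3"
  proof -
    have "pi \<le> 16/5" using pi_approx by simp
    then have "x \<le> 8/5" using assms(2) by linarith
    then have "x * x \<le> 8/5 * (8/5)" using assms(1) by (intro mult_mono) auto
    then show ?thesis by simp
  qed
  then have "x ^ 3 / 6 \<le> x / 2"
    using mult_left_mono[of "x * x" 3 x] assms(1) by (simp add: power3_eq_cube)
  ultimately show ?thesis by linarith
qed

lemma dist_cos_sin:
  "dist (cos a, sin a) (cos b, sin b) = 2 * \<bar>sin ((a - b) / 2)\<bar>"
proof -
  have "cos (a - b) = 1 - 2 * (sin ((a - b) / 2))\<^sup>2"
    by (metis cos_double_sin field_sum_of_halves mult_2)
  then have "(cos a - cos b)\<^sup>2 + (sin a - sin b)\<^sup>2 = (2 * \<bar>sin ((a - b) / 2)\<bar>)\<^sup>2"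
    by (simp add: power2_eq_square cos_diff algebra_simps)
  then show ?thesis
    unfolding dist_Pair_Pair dist_real_def power2_abs by (simp only: real_sqrt_abs)
qed

lemma sum_comp_le_twice_sum:
  fixes g :: "'b \<Rightarrow> real"
  assumes "finite A" "finite B" "finite R" "inj_on h A" "inj_on h B" "h ` (A \<union> B) \<subseteq> R"
    and "\<And>r. r \<in> R \<Longrightarrow> 0 \<le> g r"
  shows "(\<Sum>x\<in>A \<union> B. g (h x)) \<le> 2 * sum g R"
proof -
  have half: "(\<Sum>x\<in>C. g (h x)) \<le> sum g R" if "inj_on h C" "C \<subseteq> A \<union> B" for C
  proof -
    have "(\<Sum>x\<in>C. g (h x)) = sum g (h ` C)"
      by (simp add: sum.reindex[OF \<open>inj_on h C\<close>])
    also have "\<dots> \<le> sum g R"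
      using that assms by (intro sum_mono2) auto
    finally show ?thesis .
  qed
  have "(\<Sum>x\<in>A \<union> B. g (h x)) \<le> (\<Sum>x\<in>A. g (h x)) + (\<Sum>x\<in>B. g (h x))"
  proof -
    have "0 \<le> (\<Sum>x\<in>A \<inter> B. g (h x))"
      using assms by (intro sum_nonneg) auto
    then show ?thesis
      using sum.union_inter[OF \<open>finite A\<close> \<open>finite B\<close>, of "g \<circ> h"] by simp
  qed
  also have "\<dots> \<le> 2 * sum g R"
    using half[of A] half[of B] assms by simp
  finally show ?thesis .
qed

lemma sum_inverse_1_plus_9_square_le_1: "(\<Sum>r = 1..n. inverse (1 + 9 * (real r)\<^sup>2)) \<le> 1"
proof -
  have "inverse (1 + 9 * (real r)\<^sup>2) \<le> inverse (real r) - inverse (real (Suc r))" if "1 \<le> r" for r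
  proof -
    have r: "1 \<le> real r"
      using that by simp
    have "inverse (real r) - inverse (real (Suc r)) = inverse (real r * (real r + 1))"
      using r by (simp add: field_simps)
    also have "inverse (1 + 9 * (real r)\<^sup>2) \<le> \<dots>"
    proof (rule le_imp_inverse_le)
      have "real r \<le> real r * real r"
        using r mult_left_mono[of 1 "real r" "real r"] by simp
      then show "real r * (real r + 1) \<le> 1 + 9 * (real r)\<^sup>2"
        by (simp add: power2_eq_square algebra_simps)
    qed (use r in simp)
    finally show ?thesis .
  qed
  then have "(\<Sum>r = 1..n. inverse (1 + 9 * (real r)\<^sup>2))
             \<le> (\<Sum>r = 1..n. inverse (real r) - inverse (real (Suc r)))"
    by (intro sum_mono) auto
  also have "\<dots> = 1 - inverse (real (Suc n))"
    using sum_Suc_diff[of 1 n "\<lambda>r. - inverse (real r)"] by simp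
  also have "\<dots> \<le> 1"
    by simp
  finally show ?thesis .
qed

lemma cyc_dist_real:
  assumes "i \<le> n" "j \<le> n"
  shows "real (cyc_dist n i j) = min \<bar>real i - real j\<bar> (real n - \<bar>real i - real j\<bar>)"
  using assms by (auto simp: cyc_dist_def Let_def min_def)

lemma cyc_dist_ge_1:
  assumes "i \<in> {1..n}" "j \<in> {1..n}" "i \<noteq> j"
  shows "1 \<le> cyc_dist n i j"
  using assms by (auto simp: cyc_dist_def)

lemma sum_cyc_dist_le:
  fixes g :: "nat \<Rightarrow> real"
  assumes a: "a \<in> {1..n}" and g: "\<And>r. 0 \<le> g r"
  shows "(\<Sum>b\<in>{1..n} - {a}. g (cyc_dist n a b)) \<le> 4 * (\<Sum>r = 1..n. g r)"
proof -
  define d where "d b = (if b \<le> a then a - b else b - a)" for b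
  have split: "{1..n} - {a} = {1..<a} \<union> {a<..n}"
    using a by auto
  have d_inj: "inj_on d {1..<a}" "inj_on d {a<..n}"
    by (auto simp: inj_on_def d_def)
  have nd_inj: "inj_on (\<lambda>b. n - d b) {1..<a}" "inj_on (\<lambda>b. n - d b) {a<..n}"
    using a by (auto simp: inj_on_def d_def)
  have "g (cyc_dist n a b) \<le> g (d b) + g (n - d b)" for b
    using g by (simp add: cyc_dist_def Let_def d_def min_def add_increasing add_increasing2)
  then have "(\<Sum>b\<in>{1..n} - {a}. g (cyc_dist n a b))
             \<le> (\<Sum>b\<in>{1..<a} \<union> {a<..n}. g (d b)) + (\<Sum>b\<in>{1..<a} \<union> {a<..n}. g (n - d b))"
    unfolding split sum.distrib[symmetric] by (rule sum_mono)
  also have "\<dots> \<le> 2 * (\<Sum>r = 1..n. g r) + 2 * (\<Sum>r = 1..n. g r)"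
    using a g by (intro add_mono sum_comp_le_twice_sum d_inj nd_inj) (auto simp: d_def)
  finally show ?thesis
    by simp
qed

lemma dist_circ_pt:
  assumes "i \<le> n" "j \<le> n"
  shows "dist (circ_pt n i) (circ_pt n j) = 2 * sin (pi * real (cyc_dist n i j) / real n)"
proof -
  define x where "x = pi * \<bar>real i - real j\<bar> / real n"
  have ij: "\<bar>real i - real j\<bar> \<le> real n"
    using assms by linarith
  have x: "0 \<le> x" "x \<le> pi"
    by (cases "n = 0") (use ij in \<open>auto simp: x_def divide_le_eq mult_left_mono\<close>)
  have "(2 * pi * real i / real n - 2 * pi * real j / real n) / 2 = pi * (real i - real j) / real n"
    by (simp add: diff_divide_distrib right_diff_distrib)
  then have "dist (circ_pt n i) (circ_pt n j) = 2 * \<bar>sin (pi * (real i - real j) / real n)\<bar>"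
    unfolding circ_pt_def dist_cos_sin by simp
  also have "\<bar>sin (pi * (real i - real j) / real n)\<bar> = \<bar>sin x\<bar>"
  proof -
    have "pi * (real i - real j) / real n = x \<or> pi * (real i - real j) / real n = - x"
      by (cases "j \<le> i") (simp_all add: x_def abs_if right_diff_distrib diff_divide_distrib)
    then show ?thesis by (metis abs_minus_cancel sin_minus)
  qed
  also have "\<bar>sin x\<bar> = sin x"
    using sin_ge_zero[OF x] by simp
  also have "sin x = sin (pi * real (cyc_dist n i j) / real n)"
  proof (cases "n = 0")
    case False
    have "sin x = sin (pi * (real n - \<bar>real i - real j\<bar>) / real n)"
      using False by (simp add: x_def diff_divide_distrib right_diff_distrib)
    then show ?thesis
      by (simp add: cyc_dist_real[OF assms] x_def min_def)
  qed (simp add: x_def)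
  finally show ?thesis .
qed

lemma dist_circ_pt_le:
  assumes "i \<le> n" "j \<le> n"
  shows "dist (circ_pt n i) (circ_pt n j) \<le> 2 * pi * real (cyc_dist n i j) / real n"
  using dist_circ_pt[OF assms] sin_x_le_x[of "pi * real (cyc_dist n i j) / real n"] by simp

lemma dist_circ_pt_ge:
  assumes "i \<le> n" "j \<le> n"
  shows "3 * real (cyc_dist n i j) / real n \<le> dist (circ_pt n i) (circ_pt n j)"
proof -
  define x where "x = pi * real (cyc_dist n i j) / real n"
  have half: "2 * real (cyc_dist n i j) \<le> real n"
    using cyc_dist_real[OF assms] by linarith
  have x: "0 \<le> x" "x \<le> pi / 2"
    by (cases "n = 0") (use half in \<open>auto simp: x_def divide_le_eq\<close>)
  have "3 * real (cyc_dist n i j) / real n \<le> x"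
    unfolding x_def using pi_gt3 by (intro divide_right_mono mult_right_mono) auto
  also have "x \<le> 2 * sin x"
    using half_le_sin[OF x] by simp
  finally show ?thesis
    by (simp add: dist_circ_pt[OF assms] x_def)
qed

definition cauchy_kernel :: "'a::real_normed_vector \<Rightarrow> real" where
  "cauchy_kernel v = inverse (1 + (norm v)\<^sup>2)"

definition tsne_partition :: "nat \<Rightarrow> (nat \<Rightarrow> real \<times> real) \<Rightarrow> real" where
  "tsne_partition n y = (\<Sum>a\<in>{1..n}. \<Sum>b\<in>{1..n} - {a}. cauchy_kernel (y a - y b))"

lemma cauchy_kernel_pos: "0 < cauchy_kernel v"
  by (simp add: cauchy_kernel_def add_pos_nonneg)

lemma cauchy_kernel_le_1: "cauchy_kernel v \<le> 1"
  by (simp add: cauchy_kernel_def inverse_le_1_iff)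

lemma cauchy_kernel_ge:
  assumes "norm v \<le> r"
  shows "inverse (1 + r\<^sup>2) \<le> cauchy_kernel v"
  unfolding cauchy_kernel_def
  using assms by (intro le_imp_inverse_le add_left_mono power_mono) (auto intro: add_pos_nonneg)

lemma cauchy_kernel_le:
  assumes "0 \<le> r" "r \<le> norm v"
  shows "cauchy_kernel v \<le> inverse (1 + r\<^sup>2)"
  unfolding cauchy_kernel_def
  using assms by (intro le_imp_inverse_le add_left_mono power_mono) (auto intro: add_pos_nonneg)

lemma q_aff_eq: "q_aff n y i j = cauchy_kernel (y i - y j) / tsne_partition n y"
  by (simp add: q_aff_def tsne_partition_def cauchy_kernel_def)

lemma tsne_partition_pos:
  assumes "2 \<le> n"
  shows "0 < tsne_partition n y"
  unfolding tsne_partition_def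
proof (rule sum_pos)
  fix a assume "a \<in> {1..n}"
  then have "(if a = 1 then 2 else 1) \<in> {1..n} - {a}"
    using assms by auto
  then show "0 < (\<Sum>b\<in>{1..n} - {a}. cauchy_kernel (y a - y b))"
    by (intro sum_pos) (auto simp: cauchy_kernel_pos)
qed (use assms in auto)

lemma finite_nbr_set: "finite (nbr_set n k)"
  by (rule finite_subset[of _ "{1..n} \<times> {1..n}"]) (auto simp: nbr_set_def)

lemma nbr_set_nonempty:
  assumes "2 \<le> n" "2 \<le> k"
  shows "nbr_set n k \<noteq> {}"
proof -
  have "(1, 2) \<in> nbr_set n k"
    using assms by (auto simp: nbr_set_def cyc_dist_def)
  then show ?thesis by blast
qed

lemma tsne_obj_eq:
  assumes "2 \<le> n"
  shows "tsne_obj n k y = (\<Sum>(i, j)\<in>nbr_set n k. ln (cauchy_kernel (y i - y j)))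
                          - real (card (nbr_set n k)) * ln (tsne_partition n y)"
proof -
  have "ln (q_aff n y i j) = ln (cauchy_kernel (y i - y j)) - ln (tsne_partition n y)" for i j
    unfolding q_aff_eq by (rule ln_divide_pos[OF cauchy_kernel_pos tsne_partition_pos[OF assms]])
  then show ?thesis
    by (simp add: tsne_obj_def case_prod_beta sum_subtractf)
qed

lemma tsne_maximizer_partition_le:
  assumes max: "tsne_maximizer n k y" and "2 \<le> n" "nbr_set n k \<noteq> {}" "0 < c"
    and z: "\<And>i j. (i, j) \<in> nbr_set n k \<Longrightarrow> c \<le> cauchy_kernel (z i - z j)"
  shows "c * tsne_partition n y \<le> tsne_partition n z"
proof -
  define N where "N = real (card (nbr_set n k))"
  have N: "0 < N"
    using assms(3) finite_nbr_set by (simp add: N_def card_gt_0_iff)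
  have "N * ln c \<le> (\<Sum>(i, j)\<in>nbr_set n k. ln (cauchy_kernel (z i - z j)))"
    unfolding N_def using z \<open>0 < c\<close>
    by (intro sum_bounded_below[where K = "ln c", simplified]) (auto simp: cauchy_kernel_pos)
  then have "N * ln c - N * ln (tsne_partition n z) \<le> tsne_obj n k z"
    by (simp add: tsne_obj_eq[OF \<open>2 \<le> n\<close>] N_def)
  also have "tsne_obj n k z \<le> tsne_obj n k y"
    using max by (simp add: tsne_maximizer_def)
  also have "(\<Sum>(i, j)\<in>nbr_set n k. ln (cauchy_kernel (y i - y j))) \<le> 0"
    by (intro sum_nonpos) (auto simp: cauchy_kernel_pos cauchy_kernel_le_1)
  then have "tsne_obj n k y \<le> - N * ln (tsne_partition n y)"
    by (simp add: tsne_obj_eq[OF \<open>2 \<le> n\<close>] N_def)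
  finally have "N * (ln c + ln (tsne_partition n y)) \<le> N * ln (tsne_partition n z)"
    by (simp add: algebra_simps)
  then have "ln c + ln (tsne_partition n y) \<le> ln (tsne_partition n z)"
    using N by simp
  then have "ln (c * tsne_partition n y) \<le> ln (tsne_partition n z)"
    by (simp add: ln_mult_pos \<open>0 < c\<close> tsne_partition_pos[OF \<open>2 \<le> n\<close>])
  then show ?thesis
    using \<open>0 < c\<close> tsne_partition_pos[OF \<open>2 \<le> n\<close>] by simp
qed

definition scaled_circle :: "nat \<Rightarrow> nat \<Rightarrow> real \<times> real" where
  "scaled_circle n i = real n *\<^sub>R circ_pt n i"

lemma norm_scaled_circle_diff:
  "norm (scaled_circle n i - scaled_circle n j) = real n * dist (circ_pt n i) (circ_pt n j)"
  by (simp add: scaled_circle_def dist_norm flip: scaleR_diff_right)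

lemma scaled_circle_nbr_kernel_ge:
  assumes "(i, j) \<in> nbr_set n k"
  shows "inverse (1 + (pi * real k)\<^sup>2) \<le> cauchy_kernel (scaled_circle n i - scaled_circle n j)"
proof (rule cauchy_kernel_ge)
  have ij: "i \<le> n" "j \<le> n" "real (cyc_dist n i j) \<le> real k / 2"
    using assms by (auto simp: nbr_set_def)
  then have "real n * dist (circ_pt n i) (circ_pt n j) \<le> 2 * pi * real (cyc_dist n i j)"
    using dist_circ_pt_le[OF ij(1,2)] assms
    by (cases "n = 0") (auto simp: nbr_set_def field_simps)
  also have "\<dots> \<le> pi * real k"
    using ij(3) by simp
  finally show "norm (scaled_circle n i - scaled_circle n j) \<le> pi * real k"
    by (simp add: norm_scaled_circle_diff)
qed

lemma scaled_circle_kernel_le: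
  assumes "a \<le> n" "b \<le> n"
  shows "cauchy_kernel (scaled_circle n a - scaled_circle n b) \<le> inverse (1 + 9 * (real (cyc_dist n a b))\<^sup>2)"
proof -
  have "3 * real (cyc_dist n a b) \<le> norm (scaled_circle n a - scaled_circle n b)"
    using dist_circ_pt_ge[OF assms] assms
    by (cases "n = 0") (auto simp: norm_scaled_circle_diff field_simps cyc_dist_def)
  then show ?thesis
    using cauchy_kernel_le[of "3 * real (cyc_dist n a b)"] by (simp add: power_mult_distrib)
qed

lemma scaled_circle_partition_le: "tsne_partition n (scaled_circle n) \<le> 4 * real n"
proof -
  have "(\<Sum>b\<in>{1..n} - {a}. cauchy_kernel (scaled_circle n a - scaled_circle n b)) \<le> 4"
    if a: "a \<in> {1..n}" for a
  proof -
    have "(\<Sum>b\<in>{1..n} - {a}. cauchy_kernel (scaled_circle n a - scaled_circle n b))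
          \<le> (\<Sum>b\<in>{1..n} - {a}. inverse (1 + 9 * (real (cyc_dist n a b))\<^sup>2))"
      using a by (intro sum_mono scaled_circle_kernel_le) auto
    also have "\<dots> \<le> 4 * (\<Sum>r = 1..n. inverse (1 + 9 * (real r)\<^sup>2))"
      using a by (intro sum_cyc_dist_le) auto
    also have "\<dots> \<le> 4"
      using sum_inverse_1_plus_9_square_le_1[of n] by simp
    finally show ?thesis .
  qed
  then have "tsne_partition n (scaled_circle n) \<le> real (card {1..n}) * 4"
    unfolding tsne_partition_def by (intro sum_bounded_above)
  then show ?thesis
    by simp
qed

lemma bilipschitz_dist_le:
  assumes bl: "bilipschitz n y S L" and ij: "i \<in> {1..n}" "j \<in> {1..n}"
  shows "dist (y i) (y j) \<le> 2 * pi * S * L * real (cyc_dist n i j) / real n"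
proof (cases "i = j")
  case False
  define ch where "ch = dist (circ_pt n i) (circ_pt n j)"
  have SL: "0 \<le> S * L"
    using bl by (simp add: bilipschitz_def)
  have "0 < 3 * real (cyc_dist n i j) / real n"
    using cyc_dist_ge_1[OF ij False] ij by simp
  also have "\<dots> \<le> ch"
    unfolding ch_def using ij by (intro dist_circ_pt_ge) auto
  finally have "0 < ch" .
  moreover have "dist (y i) (y j) / ch \<le> S * L"
    using bl ij False by (simp add: bilipschitz_def ch_def)
  ultimately have "dist (y i) (y j) \<le> S * L * ch"
    by (simp add: divide_le_eq)
  also have "\<dots> \<le> S * L * (2 * pi * real (cyc_dist n i j) / real n)"
    unfolding ch_def using ij SL by (intro mult_left_mono dist_circ_pt_le) auto
  finally show ?thesis
    by (simp add: mult_ac)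
qed (simp add: cyc_dist_def)

lemma bilipschitz_partition_ge:
  assumes bl: "bilipschitz n y S L" and M: "2 * M \<le> n" "real M * S \<le> real n"
  shows "real n * real M / (2 * (1 + (2 * pi * L)\<^sup>2)) \<le> tsne_partition n y"
proof -
  define c where "c = inverse (1 + (2 * pi * L)\<^sup>2)"
  have SL: "0 < S" "1 \<le> L"
    using bl by (auto simp: bilipschitz_def)
  have row: "real M * c \<le> (\<Sum>b\<in>{1..n} - {a}. cauchy_kernel (y a - y b))"
    if a: "a \<in> {1..n - M}" for a
  proof -
    have "c \<le> cauchy_kernel (y a - y b)" if b: "b \<in> {a + 1..a + M}" for b
      unfolding c_def
    proof (rule cauchy_kernel_ge)
      have ab: "a \<in> {1..n}" "b \<in> {1..n}"
        using a b M by auto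
      have "real (cyc_dist n a b) \<le> real M"
        using cyc_dist_real[of a n b] ab b by auto
      then have "2 * pi * S * L * real (cyc_dist n a b) \<le> 2 * pi * L * (real M * S)"
        using SL by (simp add: mult_left_mono)
      also have "\<dots> \<le> 2 * pi * L * real n"
        using SL M(2) by (intro mult_left_mono) auto
      finally have "2 * pi * S * L * real (cyc_dist n a b) / real n \<le> 2 * pi * L"
        using a SL by (simp add: divide_le_eq)
      then show "norm (y a - y b) \<le> 2 * pi * L"
        using bilipschitz_dist_le[OF bl ab] by (simp add: dist_norm)
    qed
    then have "real M * c \<le> (\<Sum>b\<in>{a + 1..a + M}. cauchy_kernel (y a - y b))"
      using sum_bounded_below[of "{a + 1..a + M}" c] by simp
    also have "\<dots> \<le> (\<Sum>b\<in>{1..n} - {a}. cauchy_kernel (y a - y b))"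
      using a by (intro sum_mono2) (auto simp: cauchy_kernel_pos less_imp_le)
    finally show ?thesis .
  qed
  have "real n * real M / (2 * (1 + (2 * pi * L)\<^sup>2)) = real n / 2 * (real M * c)"
    by (simp add: c_def field_simps)
  also have "\<dots> \<le> real (n - M) * (real M * c)"
    using M by (intro mult_right_mono) (auto simp: c_def)
  also have "\<dots> \<le> (\<Sum>a\<in>{1..n - M}. \<Sum>b\<in>{1..n} - {a}. cauchy_kernel (y a - y b))"
    using sum_bounded_below[of "{1..n - M}" "real M * c", OF row] by simp
  also have "\<dots> \<le> tsne_partition n y"
    unfolding tsne_partition_def by (intro sum_mono2) (auto intro: sum_nonneg less_imp_le cauchy_kernel_pos)
  finally show ?thesis .
qed

lemma tsne_maximizer_distortion_bound:
  assumes max: "tsne_maximizer n k y" and bl: "bilipschitz n y S L" and k: "2 \<le> k"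
    and M: "1 \<le> M" "2 * M \<le> n" "real M * S \<le> real n"
  shows "real M \<le> 8 * (1 + (pi * real k)\<^sup>2) * (1 + (2 * pi * L)\<^sup>2)"
proof -
  define A where "A = 1 + (pi * real k)\<^sup>2"
  define D where "D = 1 + (2 * pi * L)\<^sup>2"
  have n: "2 \<le> n"
    using M by simp
  have A: "0 < A" and D: "0 < D"
    by (simp_all add: A_def D_def add_pos_nonneg)
  have "inverse A * tsne_partition n y \<le> tsne_partition n (scaled_circle n)"
    using A scaled_circle_nbr_kernel_ge
    by (intro tsne_maximizer_partition_le[OF max n nbr_set_nonempty[OF n k]]) (auto simp: A_def)
  also have "\<dots> \<le> 4 * real n"
    by (rule scaled_circle_partition_le)
  finally have "tsne_partition n y \<le> 4 * real n * A"
    using A by (simp add: field_simps)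
  have "real n * real M \<le> 2 * D * tsne_partition n y"
    using bilipschitz_partition_ge[OF bl M(2,3)] D by (simp add: D_def field_simps)
  also have "\<dots> \<le> 2 * D * (4 * real n * A)"
    using D \<open>tsne_partition n y \<le> 4 * real n * A\<close> by (intro mult_left_mono) auto
  finally have "real n * real M \<le> real n * (8 * A * D)"
    by (simp add: algebra_simps)
  then show ?thesis
    using n by (simp add: A_def D_def)
qed

lemma le_min_distortion_if_tsne_maximizer:
  assumes max: "tsne_maximizer n k y" and bl: "\<exists>L. bilipschitz n y S L" and k: "2 \<le> k"
    and M: "2 * M \<le> n" "real M * S \<le> real n"
    and C: "8 * (1 + (pi * real k)\<^sup>2) * (1 + (2 * pi * C)\<^sup>2) < real M"
  shows "C \<le> min_distortion n y S"
  unfolding min_distortion_def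
proof (rule cInf_greatest)
  have "0 \<le> 8 * (1 + (pi * real k)\<^sup>2) * (1 + (2 * pi * C)\<^sup>2)"
    by simp
  then have "1 \<le> M"
    using C by linarith
  show "C \<le> L" if bl: "L \<in> {L. bilipschitz n y S L}" for L
  proof (rule ccontr)
    assume "\<not> C \<le> L"
    moreover have "1 \<le> L"
      using bl by (simp add: bilipschitz_def)
    ultimately have "(2 * pi * L)\<^sup>2 \<le> (2 * pi * C)\<^sup>2"
      by (intro power_mono) auto
    have "real M \<le> 8 * (1 + (pi * real k)\<^sup>2) * (1 + (2 * pi * L)\<^sup>2)"
      using tsne_maximizer_distortion_bound[OF max _ k \<open>1 \<le> M\<close> M] bl by simp
    also have "\<dots> \<le> 8 * (1 + (pi * real k)\<^sup>2) * (1 + (2 * pi * C)\<^sup>2)"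
      using \<open>(2 * pi * L)\<^sup>2 \<le> (2 * pi * C)\<^sup>2\<close> by (intro mult_left_mono) auto
    finally show False
      using C by simp
  qed
qed (use bl in auto)

theorem theorem1:
  fixes \<tau> :: real and k :: nat and y :: "nat \<Rightarrow> nat \<Rightarrow> real \<times> real"
  assumes "0 < \<tau>" and "\<tau> < 1"
    and "k > 0" and "even k"
    and "\<forall>\<^sub>F n in sequentially.
           tsne_maximizer n k (y n) \<and> (\<exists>L. bilipschitz n (y n) (real n powr \<tau>) L)"
  shows "filterlim (\<lambda>n. min_distortion n (y n) (real n powr \<tau>)) at_top sequentially"
  unfolding filterlim_at_top
proof
  fix C :: real
  have k: "2 \<le> k"
    using \<open>k > 0\<close> \<open>even k\<close> by presburger
  obtain M :: nat where M: "8 * (1 + (pi * real k)\<^sup>2) * (1 + (2 * pi * C)\<^sup>2) < real M"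
    using reals_Archimedean2 by blast
  have "\<forall>\<^sub>F n in sequentially. real M * real n powr \<tau> \<le> real n"
    using \<open>\<tau> < 1\<close> by real_asymp
  with assms(5) eventually_ge_at_top[of "2 * M"]
  show "\<forall>\<^sub>F n in sequentially. C \<le> min_distortion n (y n) (real n powr \<tau>)"
    by eventually_elim (use le_min_distortion_if_tsne_maximizer k M in blast)
qed

end
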